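(* Let $f:[-1,1]\to\mathbb{R}$ be convex and symmetric ($f(x)=f(-x)$). Define, for $d_1,d_2\in[-1,1]$, $$f^+(d_1,d_2)=\frac{1+d_1d_2}{2}\,f\!\left(\frac{d_1+d_2}{1+d_1d_2}\right)+\frac{1-d_1d_2}{2}\,f\!\left(\frac{d_1-d_2}{1-d_1d_2}\right).$$ Then $f^+$ is convex and symmetric in each of its variables, i.e. for each fixed $d_2$ the map $d_1\mapsto f^+(d_1,d_2)$ is convex on $[-1,1]$ with $f^+(d_1,d_2)=f^+(-d_1,d_2)$, and likewise in $d_2$ for fixed $d_1$.
   Context: In the definition of $f^+$, a term whose prefactor $1\pm d_1d_2$ equals $0$ is taken to be $0$. *)

theory Defs
  imports "HOL-Analysis.Analysis"
begin

definition f_plus :: "(real \<Rightarrow> real) \<Rightarrow> real \<Rightarrow> real \<Rightarrow> real" where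
  "f_plus f d1 d2 =
     (if 1 + d1 * d2 = 0 then 0
      else (1 + d1 * d2) / 2 * f ((d1 + d2) / (1 + d1 * d2)))
   + (if 1 - d1 * d2 = 0 then 0
      else (1 - d1 * d2) / 2 * f ((d1 - d2) / (1 - d1 * d2)))"

end

theory Submission
  imports Defs
begin

text \<open>Both summands of f+ are perspectives t f(x/t) of f, evaluated along affine lines
  (t, x) = (1 \<plusminus> d1 d2, d1 \<plusminus> d2) in each variable, which stay in the cone |x| \<le> t.
  On this cone the perspective of a convex f on [-1,1] is positively homogeneous and
  subadditive, hence convex, and it is even in x when f is even; convexity and symmetry of f+
  in each variable follow.\<close>

text \<open>The value 0 at t = 0 matches the convention in f+; on the cone it is the only
  consistent one, since t = 0 forces x = 0.\<close>

definition perspective :: "(real \<Rightarrow> real) \<Rightarrow> real \<Rightarrow> real \<Rightarrow> real" where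
  "perspective f t x = (if t = 0 then 0 else t * f (x / t))"

lemma f_plus_eq_perspective:
  "f_plus f d1 d2 =
     (perspective f (1 + d1 * d2) (d1 + d2) + perspective f (1 - d1 * d2) (d1 - d2)) / 2"
  unfolding f_plus_def perspective_def by simp

lemma divide_in_unit_interval: "\<bar>x\<bar> \<le> t \<Longrightarrow> x / t \<in> {-1..(1::real)}"
  by (cases "t = 0") (auto simp: field_simps abs_le_iff)

lemma perspective_uminus:
  assumes even: "\<And>y. y \<in> {-1..1} \<Longrightarrow> f y = f (- y)" and "\<bar>x\<bar> \<le> t"
  shows "perspective f t (- x) = perspective f t x"
  using even[OF divide_in_unit_interval[OF assms(2)]] by (simp add: perspective_def)

lemma perspective_scale:
  assumes "0 \<le> c"
  shows "c * perspective f t x = perspective f (c * t) (c * x)"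
  using assms by (cases "c = 0") (simp_all add: perspective_def)

lemma perspective_add_le:
  assumes conv: "convex_on {-1..1} f" and "\<bar>x1\<bar> \<le> t1" "\<bar>x2\<bar> \<le> t2"
  shows "perspective f (t1 + t2) (x1 + x2) \<le> perspective f t1 x1 + perspective f t2 x2"
proof (cases "t1 = 0 \<or> t2 = 0")
  case True
  with assms(2,3) show ?thesis by (auto simp: perspective_def)
next
  case False
  with assms(2,3) have t1: "t1 > 0" and t2: "t2 > 0" by auto
  define m where "m = t2 / (t1 + t2)"
  have m: "0 \<le> m" "m \<le> 1" "1 - m = t1 / (t1 + t2)"
    using t1 t2 by (auto simp: m_def field_simps)
  have mix: "(x1 + x2) / (t1 + t2) = (1 - m) * (x1 / t1) + m * (x2 / t2)"
  proof -
    have "(1 - m) * (x1 / t1) = x1 / (t1 + t2)" "m * (x2 / t2) = x2 / (t1 + t2)"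
      using t1 t2 unfolding m(3) by (simp_all add: m_def)
    then show ?thesis by (simp add: add_divide_distrib)
  qed
  have "f ((x1 + x2) / (t1 + t2)) \<le> (1 - m) * f (x1 / t1) + m * f (x2 / t2)"
    using convex_onD[OF conv m(1,2) divide_in_unit_interval divide_in_unit_interval] assms(2,3)
    by (simp add: mix)
  then have "(t1 + t2) * f ((x1 + x2) / (t1 + t2))
      \<le> (t1 + t2) * ((1 - m) * f (x1 / t1) + m * f (x2 / t2))"
    using t1 t2 by (simp add: mult_left_mono)
  also have "\<dots> = t1 * f (x1 / t1) + t2 * f (x2 / t2)"
  proof -
    have "(t1 + t2) * (1 - m) = t1" "(t1 + t2) * m = t2"
      using t1 t2 unfolding m(3) by (simp_all add: m_def)
    then show ?thesis by (simp add: distrib_left flip: mult.assoc)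
  qed
  finally have "(t1 + t2) * f ((x1 + x2) / (t1 + t2)) \<le> t1 * f (x1 / t1) + t2 * f (x2 / t2)" .
  with t1 t2 show ?thesis by (simp add: perspective_def)
qed

lemma convex_on_perspective_affine:
  assumes conv: "convex_on {-1..1} f" and "convex I"
    and cone: "\<And>d. d \<in> I \<Longrightarrow> \<bar>r + s * d\<bar> \<le> p + q * d"
  shows "convex_on I (\<lambda>d. perspective f (p + q * d) (r + s * d))"
proof (rule convex_onI[OF _ \<open>convex I\<close>])
  fix u a b :: real
  assume u: "0 < u" "u < 1" and ab: "a \<in> I" "b \<in> I"
  have "perspective f (p + q * ((1 - u) * a + u * b)) (r + s * ((1 - u) * a + u * b))
      = perspective f ((1 - u) * (p + q * a) + u * (p + q * b))
                      ((1 - u) * (r + s * a) + u * (r + s * b))"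
    by (simp add: algebra_simps)
  also have "\<dots> \<le> perspective f ((1 - u) * (p + q * a)) ((1 - u) * (r + s * a))
                 + perspective f (u * (p + q * b)) (u * (r + s * b))"
    using u cone[OF ab(1)] cone[OF ab(2)]
    by (intro perspective_add_le[OF conv]) (simp_all add: abs_mult mult_left_mono)
  also have "\<dots> = (1 - u) * perspective f (p + q * a) (r + s * a)
                 + u * perspective f (p + q * b) (r + s * b)"
    using u by (simp add: perspective_scale)
  finally show "perspective f (p + q * ((1 - u) *\<^sub>R a + u *\<^sub>R b)) (r + s * ((1 - u) *\<^sub>R a + u *\<^sub>R b))
      \<le> (1 - u) * perspective f (p + q * a) (r + s * a) + u * perspective f (p + q * b) (r + s * b)"
    by simp
qed

lemma abs_add_le_one_add_mult:
  fixes a b :: real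
  assumes "a \<in> {-1..1}" "b \<in> {-1..1}"
  shows "\<bar>a + b\<bar> \<le> 1 + a * b"
proof -
  have "0 \<le> (1 - a) * (1 - b)" "0 \<le> (1 + a) * (1 + b)"
    using assms by simp_all
  then show ?thesis by (simp add: algebra_simps abs_le_iff)
qed

lemma abs_diff_le_one_minus_mult:
  fixes a b :: real
  assumes "a \<in> {-1..1}" "b \<in> {-1..1}"
  shows "\<bar>a - b\<bar> \<le> 1 - a * b"
  using abs_add_le_one_add_mult[of a "- b"] assms by simp

theorem lemma1:
  fixes f :: "real \<Rightarrow> real"
  assumes conv: "convex_on {-1..1} f"
    and sym: "\<And>x. x \<in> {-1..1} \<Longrightarrow> f x = f (- x)"
  shows "(\<forall>d2\<in>{-1..1}. convex_on {-1..1} (\<lambda>d1. f_plus f d1 d2)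
            \<and> (\<forall>d1\<in>{-1..1}. f_plus f d1 d2 = f_plus f (- d1) d2))
       \<and> (\<forall>d1\<in>{-1..1}. convex_on {-1..1} (\<lambda>d2. f_plus f d1 d2)
            \<and> (\<forall>d2\<in>{-1..1}. f_plus f d1 d2 = f_plus f d1 (- d2)))"
proof -
  note cone = abs_add_le_one_add_mult abs_diff_le_one_minus_mult
  have convex_left: "convex_on {-1..1} (\<lambda>d1. f_plus f d1 c)"
   and convex_right: "convex_on {-1..1} (\<lambda>d2. f_plus f c d2)" if c: "c \<in> {-1..1}" for c
  proof -
    have "convex_on {-1..1} (\<lambda>d. perspective f (1 + c * d) (c + 1 * d))"
         "convex_on {-1..1} (\<lambda>d. perspective f (1 + (- c) * d) (- c + 1 * d))"
         "convex_on {-1..1} (\<lambda>d. perspective f (1 + (- c) * d) (c + (- 1) * d))"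
      using cone c by (intro convex_on_perspective_affine[OF conv]; force simp: algebra_simps)+
    then show "convex_on {-1..1} (\<lambda>d1. f_plus f d1 c)" "convex_on {-1..1} (\<lambda>d2. f_plus f c d2)"
      unfolding f_plus_eq_perspective
      by (auto intro!: convex_on_cdiv convex_on_add simp: algebra_simps)
  qed
  have "f_plus f d1 d2 = f_plus f (- d1) d2" "f_plus f d1 d2 = f_plus f d1 (- d2)"
    if "d1 \<in> {-1..1}" "d2 \<in> {-1..1}" for d1 d2
    using perspective_uminus[of f, OF sym cone(1)[OF that]]
      perspective_uminus[of f, OF sym cone(2)[OF that]]
    unfolding f_plus_eq_perspective by (simp_all add: algebra_simps)
  with convex_left convex_right show ?thesis by blast
qed

end
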